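(* Let $N\ge1$, $a\in\{-1/2,1/2\}$, $E,\varphi\in C^1[-1,1]$, and $\tilde E=E\varphi$. Then for every $\lambda\in\mathbb{J}_N$, \[\frac{\tilde P_{N,a}(\lambda)}{\dim_{SO(2N+1/2+a)}\lambda}=\sum_{\mu\in\mathbb{J}_N}\det[I^\varphi_a(\mu_i-i+N,\lambda_j-j+N)]_{1\le i,j\le N}\frac{P_{N,a}(\mu)}{\dim_{SO(2N+1/2+a)}\mu}.\]
   Context: $\mathsf{J}^{(-1/2,-1/2)}_s(\cos\theta)=\cos s\theta$, $\mathsf{J}^{(1/2,-1/2)}_s(\cos\theta)=\sin((s+\frac12)\theta)/\sin(\theta/2)$; $W^{(-1/2,-1/2)}(0)=1$, $W^{(-1/2,-1/2)}(s)=2$ ($s>0$), $W^{(1/2,-1/2)}\equiv1$. $\mathbb{J}_N$: integer sequences $\lambda_1\ge\dots\ge\lambda_N\ge0$. $SO(2N+1/2+a)$ means $SO(2N+1)$ for $a=\frac12$ and $SO(2N)$ for $a=-\frac12$; $\dim_{SO(2N+1)}\lambda=\prod_{i<j}\frac{l_i^2-l_j^2}{m_i^2-m_j^2}\prod_i\frac{l_i}{m_i}$ ($l_i=\lambda_i+N-i+\frac12$, $m_i=N-i+\frac12$), $\dim_{SO(2N)}\lambda=\prod_{i<j}\frac{l_i^2-l_j^2}{m_i^2-m_j^2}$ ($l_i=\lambda_i+N-i$, $m_i=N-i$). For $F\in C^1[-1,1]$ put $f_j^{(N,a)}[F](k)=\frac{W^{(a,-1/2)}(k)}{\pi}\int_{-1}^1x^{N-j}F(x)\mathsf{J}^{(a,-1/2)}_k(x)(1-x)^a(1+x)^{-1/2}dx$;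 then $P_{N,a}(\lambda)=C_{N,a}\det[f^{(N,a)}_j[E](\lambda_i-i+N)]\dim_{SO(2N+1/2+a)}\lambda$ and $\tilde P_{N,a}(\lambda)=C_{N,a}\det[f^{(N,a)}_j[\tilde E](\lambda_i-i+N)]\dim_{SO(2N+1/2+a)}\lambda$, with $C_{N,1/2}=2^{N(N-1)/2}$, $C_{N,-1/2}=2^{(N-1)(N-2)/2}$. $I^\varphi_a(l,i)=\frac{W^{(a,-1/2)}(i)}{\pi}\int_{-1}^1\mathsf{J}^{(a,-1/2)}_i(x)\mathsf{J}^{(a,-1/2)}_l(x)\varphi(x)(1-x)^a(1+x)^{-1/2}dx$. *)

theory Defs
  imports "HOL-Analysis.Analysis"
begin

definition C1_on :: "real set \<Rightarrow> (real \<Rightarrow> real) \<Rightarrow> bool" where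
  "C1_on S F \<longleftrightarrow> (\<exists>F'. continuous_on S F' \<and>
      (\<forall>x\<in>S. (F has_real_derivative F' x) (at x within S)))"

text \<open>Jacobi polynomials J^{(a,-1/2)}_s for a = -1/2 and a = 1/2, via x = cos theta.
  For a = 1/2 the value at x = 1 (theta = 0) is the limit 2s+1.\<close>
definition Jac :: "real \<Rightarrow> nat \<Rightarrow> real \<Rightarrow> real" where
  "Jac a s x = (if a = -1/2 then cos (real s * arccos x)
               else if x = 1 then 2 * real s + 1
               else sin ((real s + 1/2) * arccos x) / sin (arccos x / 2))"

definition Wt :: "real \<Rightarrow> nat \<Rightarrow> real" where
  "Wt a s = (if a = -1/2 then (if s = 0 then 1 else 2) else 1)"

definition weight :: "real \<Rightarrow> real \<Rightarrow> real" where
  "weight a x = (1 - x) powr a * (1 + x) powr (-1/2)"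

text \<open>Signatures lambda in J_N, as lists [lambda_1, ..., lambda_N]; lambda_i = lam ! (i - 1).\<close>
definition JN :: "nat \<Rightarrow> nat list set" where
  "JN N = {l. length l = N \<and> sorted_wrt (\<ge>) l}"

definition detN :: "nat \<Rightarrow> (nat \<Rightarrow> nat \<Rightarrow> real) \<Rightarrow> real" where
  "detN N A = (\<Sum>p | p permutes {1..N}. of_int (sign p) * (\<Prod>i=1..N. A i (p i)))"

definition dimSO :: "real \<Rightarrow> nat \<Rightarrow> nat list \<Rightarrow> real" where
  "dimSO a N lam =
    (if a = 1/2 then
       (let l = (\<lambda>i. real (lam ! (i - 1)) + real N - real i + 1/2);
            m = (\<lambda>i. real N - real i + 1/2)
        in (\<Prod>i\<in>{1..N}. \<Prod>j\<in>{i<..N}. (l i ^ 2 - l j ^ 2) / (m i ^ 2 - m j ^ 2))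
           * (\<Prod>i\<in>{1..N}. l i / m i))
     else
       (let l = (\<lambda>i. real (lam ! (i - 1)) + real N - real i);
            m = (\<lambda>i. real N - real i)
        in (\<Prod>i\<in>{1..N}. \<Prod>j\<in>{i<..N}. (l i ^ 2 - l j ^ 2) / (m i ^ 2 - m j ^ 2))))"

definition fcoef :: "real \<Rightarrow> nat \<Rightarrow> nat \<Rightarrow> (real \<Rightarrow> real) \<Rightarrow> nat \<Rightarrow> real" where
  "fcoef a N j F k = Wt a k / pi *
     (LINT x:{-1..1}|lborel. x ^ (N - j) * F x * Jac a k x * weight a x)"

definition CNa :: "real \<Rightarrow> nat \<Rightarrow> real" where
  "CNa a N = (if a = 1/2 then 2 ^ (N * (N - 1) div 2) else 2 ^ ((N - 1) * (N - 2) div 2))"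

definition PNa :: "real \<Rightarrow> nat \<Rightarrow> (real \<Rightarrow> real) \<Rightarrow> nat list \<Rightarrow> real" where
  "PNa a N E lam = CNa a N * detN N (\<lambda>i j. fcoef a N j E (lam ! (i - 1) + N - i)) * dimSO a N lam"

definition PtildeNa :: "real \<Rightarrow> nat \<Rightarrow> (real \<Rightarrow> real) \<Rightarrow> (real \<Rightarrow> real) \<Rightarrow> nat list \<Rightarrow> real" where
  "PtildeNa a N E \<phi> lam = PNa a N (\<lambda>x. E x * \<phi> x) lam"

definition Icoef :: "real \<Rightarrow> (real \<Rightarrow> real) \<Rightarrow> nat \<Rightarrow> nat \<Rightarrow> real" where
  "Icoef a \<phi> l i = Wt a i / pi *
     (LINT x:{-1..1}|lborel. Jac a i x * Jac a l x * \<phi> x * weight a x)"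

end

theory Submission
  imports Defs
begin

text \<open>
  Under x = cos t the weight (1 - x) powr a * (1 + x) powr (-1/2) dx becomes dt for a = -1/2
  and (1 - cos t) dt for a = 1/2 on [0, pi], and the polynomials J_n become cos (n t) and
  sin ((n + 1/2) t) / sin (t/2), which are orthogonal with squared norms pi / W(n).  They span
  an algebra that separates points, so by Stone-Weierstrass they are complete and Parseval's
  identity holds.  Applied to x^(N-j) E and J_l phi it gives
  f_j[E phi](l) = sum_m I^phi(m, l) f_j[E](m), i.e. the matrix of the coefficients of E phi is
  the product of two infinite matrices.  The Cauchy-Binet formula for this product is a sum
  over injective index tuples; grouping these by their decreasing rearrangement
  (mu_i - i + N)_i turns it into a sum over mu in J_N, and dividing by the (positive)
  dimensions gives the claim.
\<close>

section \<open>Jacobi polynomials in trigonometric form\<close>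

text \<open>Both families obey the Chebyshev recurrence: a = -1/2 gives the first-kind polynomials
  T_n, a = 1/2 the fourth-kind polynomials W_n.\<close>

fun jacobi_rec :: "real \<Rightarrow> nat \<Rightarrow> real \<Rightarrow> real" where
  "jacobi_rec a 0 x = 1"
| "jacobi_rec a (Suc 0) x = (if a = -1/2 then x else 2 * x + 1)"
| "jacobi_rec a (Suc (Suc n)) x = 2 * x * jacobi_rec a (Suc n) x - jacobi_rec a n x"

lemma jacobi_rec_cos_first_kind:
  assumes "a = -1/2"
  shows "jacobi_rec a n (cos t) = cos (real n * t)"
proof (induction n rule: induct_nat_012)
  case (ge2 n)
  have "cos (y + t) = 2 * cos t * cos y - cos (y - t)" for y
    by (simp add: cos_add cos_diff)
  from this[of "real (Suc n) * t"] ge2 assms show ?case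
    by (simp add: algebra_simps)
qed (use assms in auto)

lemma jacobi_rec_cos_fourth_kind:
  assumes "a \<noteq> -1/2"
  shows "jacobi_rec a n (cos t) * sin (t/2) = sin ((real n + 1/2) * t)"
proof -
  have three_term: "sin (y + t) = 2 * cos t * sin y - sin (y - t)" for y
    by (simp add: sin_add sin_diff)
  show ?thesis
  proof (induction n rule: induct_nat_012)
    case 1
    have "t/2 - t = - (t/2)" by simp
    with three_term[of "t/2"] assms show ?case
      by (simp add: algebra_simps)
  next
    case (ge2 n)
    from three_term[of "(real (Suc n) + 1/2) * t"] ge2 show ?case
      by (simp add: algebra_simps)
  qed simp
qed

lemma jacobi_rec_one: "jacobi_rec a n 1 = (if a = -1/2 then 1 else 2 * real n + 1)"
  by (induction n rule: induct_nat_012) (auto simp: algebra_simps)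

lemma continuous_on_jacobi_rec [continuous_intros]: "continuous_on S (jacobi_rec a n)"
  by (induction n rule: induct_nat_012) (cases "a = -1/2"; auto intro!: continuous_intros)+

lemma Jac_eq_jacobi_rec:
  assumes x: "x \<in> {-1..1}"
  shows "Jac a n x = jacobi_rec a n x"
proof -
  define t where "t = arccos x"
  have t: "cos t = x" "0 \<le> t" "t \<le> pi"
    using x by (auto simp: t_def arccos)
  show ?thesis
  proof (cases "a = -1/2")
    case True
    then show ?thesis
      using jacobi_rec_cos_first_kind[OF True, of n t] t by (simp add: Jac_def t_def)
  next
    case False
    show ?thesis
    proof (cases "x = 1")
      case True
      with False show ?thesis by (simp add: Jac_def jacobi_rec_one)
    next
      case x1: False
      with t have "0 < t" by (metis cos_zero order_le_less)
      with t have "sin (t/2) > 0" by (intro sin_gt_zero) auto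
      with jacobi_rec_cos_fourth_kind[OF False, of n t] t False x1 show ?thesis
        by (simp add: Jac_def t_def field_simps)
    qed
  qed
qed

lemma continuous_on_Jac: "continuous_on {-1..1} (Jac a n)"
  by (rule continuous_on_eq[OF continuous_on_jacobi_rec]) (simp add: Jac_eq_jacobi_rec)

section \<open>The substitution x = cos t\<close>

text \<open>The weight (1 - x) powr a * (1 + x) powr (-1/2) dx pulled back along x = cos t.\<close>

definition trig_weight :: "real \<Rightarrow> real \<Rightarrow> real" where
  "trig_weight a t = (if a = -1/2 then 1 else 1 - cos t)"

lemma trig_weight_nonneg: "trig_weight a t \<ge> 0"
  by (simp add: trig_weight_def)

lemma continuous_on_trig_weight [continuous_intros]: "continuous_on S (trig_weight a)"
  by (cases "a = -1/2") (auto simp: trig_weight_def intro!: continuous_intros)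

lemma sin_mult_weight_cos:
  assumes a: "a = 1/2 \<or> a = -1/2" and t: "0 < t" "t < pi"
  shows "sin t * weight a (cos t) = trig_weight a t"
proof -
  have c: "-1 < cos t" "cos t < 1"
    using t cos_monotone_0_pi[of 0 t] cos_monotone_0_pi[of t pi] by auto
  have "sin t = sqrt (sin t ^ 2)"
    using sin_gt_zero[OF t] by simp
  also have "sin t ^ 2 = (1 - cos t) * (1 + cos t)"
    by (simp add: sin_squared_eq algebra_simps power2_eq_square)
  finally have sin_sqrt: "sin t = sqrt (1 - cos t) * sqrt (1 + cos t)"
    by (simp add: real_sqrt_mult)
  have root: "y powr (1/2) = sqrt y" "y powr (- (1/2)) = 1 / sqrt y" if "y > 0" for y :: real
    using that by (simp_all add: powr_half_sqrt powr_minus_divide)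
  from a show ?thesis
  proof
    assume a: "a = 1/2"
    show ?thesis
      using c unfolding a by (simp add: weight_def trig_weight_def sin_sqrt root field_simps)
  next
    assume a: "a = -1/2"
    show ?thesis
      using c unfolding a by (simp add: weight_def trig_weight_def sin_sqrt root)
  qed
qed

lemma cos_image_0_pi: "cos ` {0..pi} = {-1..1::real}"
proof safe
  fix x :: real assume "x \<in> {-1..1}"
  then show "x \<in> cos ` {0..pi}"
    by (intro image_eqI[where x="arccos x"]) (auto simp: arccos_lbound arccos_ubound)
qed auto

lemma continuous_on_comp_cos:
  "continuous_on {-1..1} G \<Longrightarrow> continuous_on {0..pi} (\<lambda>t. G (cos t))"
  by (rule continuous_on_compose2) (auto intro: continuous_intros simp: cos_image_0_pi)

lemma set_integral_weight_eq_integral_cos: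
  assumes a: "a = 1/2 \<or> a = -1/2" and G: "continuous_on {-1..1} G"
  shows "(LINT x:{-1..1}|lborel. G x * weight a x) = integral {0..pi} (\<lambda>t. G (cos t) * trig_weight a t)"
proof -
  define f where "f x = G x * weight a x" for x
  have pullback: "\<bar>- sin t\<bar> * f (cos t) = G (cos t) * trig_weight a t" if "t \<in> {0..pi} - {0, pi}" for t
    using sin_mult_weight_cos[OF a, of t] sin_gt_zero[of t] that by (auto simp: f_def)
  have cont: "continuous_on {0..pi} (\<lambda>t. G (cos t) * trig_weight a t)"
    by (intro continuous_intros continuous_on_comp_cos G)
  have neg: "negligible {0, pi}" by simp
  have "(\<lambda>t. \<bar>- sin t\<bar> * f (cos t)) absolutely_integrable_on {0..pi} \<and>
        integral {0..pi} (\<lambda>t. \<bar>- sin t\<bar> * f (cos t)) = integral {0..pi} (\<lambda>t. G (cos t) * trig_weight a t)"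
  proof
    show "(\<lambda>t. \<bar>- sin t\<bar> * f (cos t)) absolutely_integrable_on {0..pi}"
      by (rule absolutely_integrable_spike[OF absolutely_integrable_continuous_real[OF cont] neg pullback])
    show "integral {0..pi} (\<lambda>t. \<bar>- sin t\<bar> * f (cos t)) = integral {0..pi} (\<lambda>t. G (cos t) * trig_weight a t)"
      by (rule integral_spike[OF neg pullback, symmetric])
  qed
  then have "f absolutely_integrable_on (cos ` {0..pi}) \<and>
             integral (cos ` {0..pi}) f = integral {0..pi} (\<lambda>t. G (cos t) * trig_weight a t)"
    by (subst (asm) has_absolute_integral_change_of_variables_1'[where g'="\<lambda>t. - sin t"])
       (auto intro!: inj_on_inverseI[where g=arccos] arccos_cos DERIV_cos[THEN has_field_derivative_at_within])
  then have abs_int: "f absolutely_integrable_on {-1..1}"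
    and int_eq: "integral {-1..1} f = integral {0..pi} (\<lambda>t. G (cos t) * trig_weight a t)"
    by (auto simp: cos_image_0_pi)
  have "(\<lambda>x. indicator {-1..1::real} x *\<^sub>R G x) \<in> borel_measurable borel"
    by (rule borel_measurable_continuous_on_indicator[OF _ G]) auto
  then have "(\<lambda>x. indicator {-1..1} x *\<^sub>R f x) \<in> borel_measurable lborel"
    unfolding f_def weight_def by (simp add: mult.assoc[symmetric])
  then have "(LINT x:{-1..1}|lborel. f x) = (LINT x:{-1..1}|lebesgue. f x)"
    unfolding set_lebesgue_integral_def by (simp add: integral_completion)
  also have "\<dots> = integral {-1..1} f"
    by (rule set_lebesgue_integral_eq_integral(2)[OF abs_int])
  finally show ?thesis
    using int_eq by (simp add: f_def)
qed

section \<open>Orthogonality and Parseval's identity\<close>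

definition jacobi_cos :: "real \<Rightarrow> nat \<Rightarrow> real \<Rightarrow> real" where
  "jacobi_cos a m t = jacobi_rec a m (cos t)"

lemma continuous_on_jacobi_cos [continuous_intros]: "continuous_on S (jacobi_cos a m)"
  unfolding jacobi_cos_def
  by (intro continuous_on_compose2[OF continuous_on_jacobi_rec[of UNIV]] continuous_intros) auto

lemma Wt_pos: "Wt a m > 0"
  by (simp add: Wt_def)

lemma has_integral_cos_int_mult:
  "((\<lambda>t. cos (real_of_int n * t)) has_integral (if n = 0 then pi else 0)) {0..pi}"
proof (cases "n = 0")
  case False
  have "((\<lambda>t. cos (real_of_int n * t)) has_integral
         (sin (real_of_int n * pi) / real_of_int n - sin (real_of_int n * 0) / real_of_int n)) {0..pi}"
    using False
    by (intro fundamental_theorem_of_calculus)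
       (auto intro!: derivative_eq_intros simp flip: has_real_derivative_iff_has_vector_derivative)
  moreover have "sin (real_of_int n * pi) = 0"
    by (simp add: sin_times_pi_eq_0)
  ultimately show ?thesis using False by simp
qed (use has_integral_const_real[of "1::real" 0 pi] in simp)

lemma has_integral_jacobi_cos_orthogonal:
  assumes a: "a = 1/2 \<or> a = -1/2"
  shows "((\<lambda>t. jacobi_cos a m t * jacobi_cos a k t * trig_weight a t) has_integral
           (if m = k then pi / Wt a m else 0)) {0..pi}"
proof (cases "a = -1/2")
  case True
  have eq: "jacobi_cos a m t * jacobi_cos a k t * trig_weight a t =
      (cos (real_of_int (int m - int k) * t) + cos (real_of_int (int m + int k) * t)) / 2" for t
    using True by (simp add: jacobi_cos_def jacobi_rec_cos_first_kind trig_weight_def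
        cos_add cos_diff algebra_simps)
  moreover have "((\<lambda>t. (cos (real_of_int (int m - int k) * t) + cos (real_of_int (int m + int k) * t)) / 2)
      has_integral ((if int m - int k = 0 then pi else 0) + (if int m + int k = 0 then pi else 0)) / 2) {0..pi}"
    by (intro has_integral_divide has_integral_add has_integral_cos_int_mult)
  moreover have "((if int m - int k = 0 then pi else 0) + (if int m + int k = 0 then pi else 0)) / 2
      = (if m = k then pi / Wt a m else 0)"
    using True by (auto simp: Wt_def)
  ultimately show ?thesis unfolding eq by simp
next
  case False
  \<comment> \<open>\<open>1 - cos t = 2 sin\<^sup>2 (t/2)\<close> absorbs the denominators of the fourth-kind polynomials.\<close>
  have eq: "jacobi_cos a m t * jacobi_cos a k t * trig_weight a t =
      cos (real_of_int (int m - int k) * t) - cos (real_of_int (int m + int k + 1) * t)" for t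
  proof -
    have "trig_weight a t = 2 * sin (t/2) * sin (t/2)"
      using False cos_double_sin[of "t/2"] by (simp add: trig_weight_def power2_eq_square)
    then have "jacobi_cos a m t * jacobi_cos a k t * trig_weight a t =
        2 * (jacobi_rec a m (cos t) * sin (t/2)) * (jacobi_rec a k (cos t) * sin (t/2))"
      by (simp add: jacobi_cos_def algebra_simps)
    also have "\<dots> = 2 * sin ((real m + 1/2) * t) * sin ((real k + 1/2) * t)"
      by (simp add: jacobi_rec_cos_fourth_kind[OF False])
    also have "\<dots> = cos ((real m + 1/2) * t - (real k + 1/2) * t) - cos ((real m + 1/2) * t + (real k + 1/2) * t)"
      by (simp add: cos_add cos_diff)
    also have "\<dots> = cos (real_of_int (int m - int k) * t) - cos (real_of_int (int m + int k + 1) * t)"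
      by (simp add: algebra_simps)
    finally show ?thesis .
  qed
  moreover have "((\<lambda>t. cos (real_of_int (int m - int k) * t) - cos (real_of_int (int m + int k + 1) * t))
      has_integral ((if int m - int k = 0 then pi else 0) - (if int m + int k + 1 = 0 then pi else 0))) {0..pi}"
    by (intro has_integral_diff has_integral_cos_int_mult)
  moreover have "(if int m - int k = 0 then pi else 0) - (if int m + int k + 1 = 0 then pi else 0)
      = (if m = k then pi / Wt a m else 0)"
    using False by (auto simp: Wt_def)
  ultimately show ?thesis unfolding eq by simp
qed

inductive_set jacobi_span :: "real \<Rightarrow> (real \<Rightarrow> real) set" for a where
  basis: "jacobi_rec a m \<in> jacobi_span a"
| add: "f \<in> jacobi_span a \<Longrightarrow> g \<in> jacobi_span a \<Longrightarrow> (\<lambda>x. f x + g x) \<in> jacobi_span a"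
| scale: "f \<in> jacobi_span a \<Longrightarrow> (\<lambda>x. c * f x) \<in> jacobi_span a"

lemma jacobi_span_continuous_on: "f \<in> jacobi_span a \<Longrightarrow> continuous_on S f"
  by (induction rule: jacobi_span.induct) (auto intro!: continuous_intros)

lemma jacobi_span_const: "(\<lambda>x. c) \<in> jacobi_span a"
  using jacobi_span.scale[OF jacobi_span.basis[of a 0], of c] by simp

lemma jacobi_span_diff:
  "f \<in> jacobi_span a \<Longrightarrow> g \<in> jacobi_span a \<Longrightarrow> (\<lambda>x. f x - g x) \<in> jacobi_span a"
  using jacobi_span.add[of f a "\<lambda>x. (-1) * g x"] jacobi_span.scale[of g a "-1"] by simp

lemma jacobi_span_id: "(\<lambda>x. x) \<in> jacobi_span a"
proof (cases "a = -1/2")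
  case True
  then have "jacobi_rec a 1 = (\<lambda>x. x)" by (simp add: fun_eq_iff)
  then show ?thesis using jacobi_span.basis[of a 1] by simp
next
  case False
  have "(\<lambda>x. (1/2) * (jacobi_rec a 1 x - 1)) \<in> jacobi_span a"
    by (intro jacobi_span.scale jacobi_span_diff jacobi_span.basis jacobi_span_const)
  moreover have "(\<lambda>x. (1/2) * (jacobi_rec a 1 x - 1)) = (\<lambda>x. x)"
    using False by (simp add: fun_eq_iff)
  ultimately show ?thesis by simp
qed

lemma jacobi_span_times_id: "f \<in> jacobi_span a \<Longrightarrow> (\<lambda>x. x * f x) \<in> jacobi_span a"
proof (induction rule: jacobi_span.induct)
  case (basis m)
  show ?case
  proof (cases m)
    case 0
    then show ?thesis using jacobi_span_id by simp
  next
    case (Suc n)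
    have "(\<lambda>x. (1/2) * (jacobi_rec a (Suc (Suc n)) x + jacobi_rec a n x)) \<in> jacobi_span a"
      by (intro jacobi_span.scale jacobi_span.add jacobi_span.basis)
    then show ?thesis using Suc by (simp add: algebra_simps)
  qed
next
  case (add f g)
  then have "(\<lambda>x. x * f x + x * g x) \<in> jacobi_span a" by (intro jacobi_span.add)
  then show ?case by (simp add: algebra_simps)
next
  case (scale f c)
  then have "(\<lambda>x. c * (x * f x)) \<in> jacobi_span a" by (intro jacobi_span.scale)
  then show ?case by (simp add: algebra_simps)
qed

lemma jacobi_span_times_jacobi_rec:
  assumes f: "f \<in> jacobi_span a"
  shows "(\<lambda>x. f x * jacobi_rec a m x) \<in> jacobi_span a"
proof (induction m rule: induct_nat_012)
  case 0
  then show ?case using f by simp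
next
  case 1
  have "(\<lambda>x. 2 * (x * f x) + f x) \<in> jacobi_span a"
    by (intro jacobi_span.add jacobi_span.scale jacobi_span_times_id f)
  then show ?case
    using jacobi_span_times_id[OF f] by (cases "a = -1/2") (simp_all add: algebra_simps)
next
  case (ge2 m)
  have "(\<lambda>x. 2 * (x * (f x * jacobi_rec a (Suc m) x)) - f x * jacobi_rec a m x) \<in> jacobi_span a"
    using ge2 by (intro jacobi_span_diff jacobi_span.scale jacobi_span_times_id)
  then show ?case by (simp add: algebra_simps)
qed

lemma jacobi_span_mult:
  "g \<in> jacobi_span a \<Longrightarrow> f \<in> jacobi_span a \<Longrightarrow> (\<lambda>x. f x * g x) \<in> jacobi_span a"
proof (induction g rule: jacobi_span.induct)
  case (basis m)
  then show ?case by (rule jacobi_span_times_jacobi_rec)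
next
  case (add g h)
  then have "(\<lambda>x. f x * g x + f x * h x) \<in> jacobi_span a" by (intro jacobi_span.add)
  then show ?case by (simp add: algebra_simps)
next
  case (scale g c)
  then have "(\<lambda>x. c * (f x * g x)) \<in> jacobi_span a" by (intro jacobi_span.scale)
  then show ?case by (simp add: algebra_simps)
qed

lemma jacobi_span_dense_cos:
  assumes G: "continuous_on {-1..1} G" and e: "e > 0"
  shows "\<exists>p\<in>jacobi_span a. \<forall>t\<in>{0..pi}. \<bar>G (cos t) - p (cos t)\<bar> \<le> e"
proof -
  have "\<exists>p. p \<in> jacobi_span a \<and> (\<forall>x\<in>{-1..1}. \<bar>G x - p x\<bar> < e)"
  proof (rule Stone_Weierstrass_HOL[of "{-1..1}" "\<lambda>f. f \<in> jacobi_span a"])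
    show "\<exists>f. f \<in> jacobi_span a \<and> f x \<noteq> f y" if "x \<in> {-1..1} \<and> y \<in> {-1..1} \<and> x \<noteq> y" for x y
      using that jacobi_span_id by blast
  qed (use jacobi_span_const jacobi_span_continuous_on jacobi_span.add jacobi_span_mult G e in auto)
  then obtain p where "p \<in> jacobi_span a" "\<forall>x\<in>{-1..1}. \<bar>G x - p x\<bar> < e"
    by blast
  then show ?thesis
    by (intro bexI[of _ p]) (auto intro: less_imp_le)
qed

lemma jacobi_span_expansion:
  "p \<in> jacobi_span a \<Longrightarrow> \<exists>K c. \<forall>n\<ge>K. \<forall>x. p x = (\<Sum>m<n. c m * jacobi_rec a m x)"
proof (induction rule: jacobi_span.induct)
  case (basis m)
  have "jacobi_rec a m x = (\<Sum>k<n. (if k = m then 1 else 0) * jacobi_rec a k x)" if "n \<ge> Suc m" for n x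
  proof -
    have "(\<Sum>k<n. (if k = m then 1 else 0) * jacobi_rec a k x) = (\<Sum>k<n. if k = m then jacobi_rec a k x else 0)"
      by (rule sum.cong) auto
    with that show ?thesis by simp
  qed
  then show ?case by (intro exI[of _ "Suc m"] exI[of _ "\<lambda>k. if k = m then 1 else 0"]) blast
next
  case (add f g)
  then obtain K1 c1 K2 c2 where
    f: "\<forall>n\<ge>K1. \<forall>x. f x = (\<Sum>m<n. c1 m * jacobi_rec a m x)" and
    g: "\<forall>n\<ge>K2. \<forall>x. g x = (\<Sum>m<n. c2 m * jacobi_rec a m x)"
    by blast
  have "\<forall>n\<ge>max K1 K2. \<forall>x. f x + g x = (\<Sum>m<n. (c1 m + c2 m) * jacobi_rec a m x)"
    using f g by (auto simp: distrib_right sum.distrib)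
  then show ?case by (intro exI[of _ "max K1 K2"] exI[of _ "\<lambda>m. c1 m + c2 m"])
next
  case (scale f c)
  then obtain K d where "\<forall>n\<ge>K. \<forall>x. f x = (\<Sum>m<n. d m * jacobi_rec a m x)"
    by blast
  then have "\<forall>n\<ge>K. \<forall>x. c * f x = (\<Sum>m<n. (c * d m) * jacobi_rec a m x)"
    by (simp add: sum_distrib_left mult.assoc)
  then show ?case by (intro exI[of _ K] exI[of _ "\<lambda>m. c * d m"])
qed

definition trig_inner :: "real \<Rightarrow> (real \<Rightarrow> real) \<Rightarrow> (real \<Rightarrow> real) \<Rightarrow> real" where
  "trig_inner a u v = integral {0..pi} (\<lambda>t. u t * v t * trig_weight a t)"

lemma has_integral_trig_inner:
  assumes "continuous_on {0..pi} u" "continuous_on {0..pi} v"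
  shows "((\<lambda>t. u t * v t * trig_weight a t) has_integral trig_inner a u v) {0..pi}"
  unfolding trig_inner_def
  by (intro integrable_integral integrable_continuous_real continuous_intros assms)

lemma trig_inner_commute: "trig_inner a u v = trig_inner a v u"
  unfolding trig_inner_def by (simp add: mult.commute mult.left_commute)

lemma trig_inner_sum_left:
  assumes "finite A" "\<And>m. m \<in> A \<Longrightarrow> continuous_on {0..pi} (f m)" "continuous_on {0..pi} v"
  shows "trig_inner a (\<lambda>t. \<Sum>m\<in>A. c m * f m t) v = (\<Sum>m\<in>A. c m * trig_inner a (f m) v)"
proof -
  have "((\<lambda>t. \<Sum>m\<in>A. c m * (f m t * v t * trig_weight a t)) has_integral
        (\<Sum>m\<in>A. c m * trig_inner a (f m) v)) {0..pi}"
    using assms by (intro has_integral_sum has_integral_mult_right has_integral_trig_inner) auto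
  then show ?thesis
    unfolding trig_inner_def
    by (intro integral_unique) (simp add: sum_distrib_right mult.assoc)
qed

lemma trig_inner_add_left:
  assumes "continuous_on {0..pi} x" "continuous_on {0..pi} y" "continuous_on {0..pi} v"
  shows "trig_inner a (\<lambda>t. x t + y t) v = trig_inner a x v + trig_inner a y v"
proof -
  have "((\<lambda>t. x t * v t * trig_weight a t + y t * v t * trig_weight a t) has_integral
        (trig_inner a x v + trig_inner a y v)) {0..pi}"
    using assms by (intro has_integral_add has_integral_trig_inner)
  then show ?thesis
    unfolding trig_inner_def by (intro integral_unique) (simp add: algebra_simps)
qed

lemma trig_inner_diff_left:
  assumes "continuous_on {0..pi} x" "continuous_on {0..pi} y" "continuous_on {0..pi} v"
  shows "trig_inner a (\<lambda>t. x t - y t) v = trig_inner a x v - trig_inner a y v"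
proof -
  have "((\<lambda>t. x t * v t * trig_weight a t - y t * v t * trig_weight a t) has_integral
        (trig_inner a x v - trig_inner a y v)) {0..pi}"
    using assms by (intro has_integral_diff has_integral_trig_inner)
  then show ?thesis
    unfolding trig_inner_def by (intro integral_unique) (simp add: algebra_simps)
qed

lemma trig_inner_add_add:
  assumes "continuous_on {0..pi} x" "continuous_on {0..pi} y"
  shows "trig_inner a (\<lambda>t. x t + y t) (\<lambda>t. x t + y t) =
         trig_inner a x x + 2 * trig_inner a x y + trig_inner a y y"
proof -
  have "((\<lambda>t. x t * x t * trig_weight a t + 2 * (x t * y t * trig_weight a t) + y t * y t * trig_weight a t)
        has_integral (trig_inner a x x + 2 * trig_inner a x y + trig_inner a y y)) {0..pi}"
    using assms by (intro has_integral_add has_integral_mult_right has_integral_trig_inner)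
  then show ?thesis
    unfolding trig_inner_def by (intro integral_unique) (simp add: algebra_simps)
qed

lemma trig_inner_self_nonneg: "trig_inner a u u \<ge> 0"
  unfolding trig_inner_def
  by (cases "(\<lambda>t. u t * u t * trig_weight a t) integrable_on {0..pi}")
     (auto intro!: integral_nonneg mult_nonneg_nonneg[OF zero_le_square trig_weight_nonneg]
       simp: not_integrable_integral)

lemma trig_inner_self_le:
  assumes "continuous_on {0..pi} u" "\<And>t. t \<in> {0..pi} \<Longrightarrow> \<bar>u t\<bar> \<le> d"
  shows "trig_inner a u u \<le> d^2 * integral {0..pi} (trig_weight a)"
proof (rule has_integral_le[OF has_integral_trig_inner[OF assms(1) assms(1)] has_integral_mult_right])
  show "(trig_weight a has_integral integral {0..pi} (trig_weight a)) {0..pi}"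
    by (intro integrable_integral integrable_continuous_real continuous_intros)
  fix t assume t: "t \<in> {0..pi}"
  have "u t * u t \<le> d^2"
    using assms(2)[OF t] abs_le_square_iff[of "u t" d] by (simp add: power2_eq_square)
  then show "u t * u t * trig_weight a t \<le> d^2 * trig_weight a t"
    by (intro mult_right_mono trig_weight_nonneg)
qed

lemma trig_inner_jacobi_cos:
  "a = 1/2 \<or> a = -1/2 \<Longrightarrow>
    trig_inner a (jacobi_cos a m) (jacobi_cos a k) = (if m = k then pi / Wt a m else 0)"
  unfolding trig_inner_def by (rule integral_unique[OF has_integral_jacobi_cos_orthogonal])

definition fourier_coeff :: "real \<Rightarrow> (real \<Rightarrow> real) \<Rightarrow> nat \<Rightarrow> real" where
  "fourier_coeff a u m = Wt a m / pi * trig_inner a u (jacobi_cos a m)"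

definition fourier_partial :: "real \<Rightarrow> (real \<Rightarrow> real) \<Rightarrow> nat \<Rightarrow> real \<Rightarrow> real" where
  "fourier_partial a u n = (\<lambda>t. \<Sum>m<n. fourier_coeff a u m * jacobi_cos a m t)"

lemma continuous_on_fourier_partial [continuous_intros]: "continuous_on S (fourier_partial a u n)"
  unfolding fourier_partial_def by (intro continuous_intros)

lemma trig_inner_fourier_partial_jacobi_cos:
  assumes a: "a = 1/2 \<or> a = -1/2" and k: "k < n"
  shows "trig_inner a (fourier_partial a u n) (jacobi_cos a k) = trig_inner a u (jacobi_cos a k)"
proof -
  have "trig_inner a (fourier_partial a u n) (jacobi_cos a k) =
        (\<Sum>m<n. fourier_coeff a u m * trig_inner a (jacobi_cos a m) (jacobi_cos a k))"
    unfolding fourier_partial_def by (rule trig_inner_sum_left) (auto intro: continuous_intros)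
  also have "\<dots> = (\<Sum>m<n. if m = k then fourier_coeff a u m * (pi / Wt a m) else 0)"
    by (rule sum.cong) (auto simp: trig_inner_jacobi_cos[OF a])
  also have "\<dots> = trig_inner a u (jacobi_cos a k)"
    using k Wt_pos[of a k] by (simp add: fourier_coeff_def)
  finally show ?thesis .
qed

lemma trig_inner_fourier_residual:
  assumes a: "a = 1/2 \<or> a = -1/2" and u: "continuous_on {0..pi} u"
  shows "trig_inner a (\<lambda>t. u t - fourier_partial a u n t) (\<lambda>t. \<Sum>m<n. c m * jacobi_cos a m t) = 0"
proof -
  have w: "continuous_on {0..pi} (\<lambda>t. u t - fourier_partial a u n t)"
    by (intro continuous_intros u)
  have "trig_inner a (\<lambda>t. u t - fourier_partial a u n t) (\<lambda>t. \<Sum>m<n. c m * jacobi_cos a m t) =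
        (\<Sum>m<n. c m * trig_inner a (jacobi_cos a m) (\<lambda>t. u t - fourier_partial a u n t))"
    by (subst trig_inner_commute) (rule trig_inner_sum_left; auto intro: continuous_intros w)
  also have "\<dots> = 0"
  proof (rule sum.neutral, rule ballI)
    fix m assume "m \<in> {..<n}"
    then have "trig_inner a (\<lambda>t. u t - fourier_partial a u n t) (jacobi_cos a m) = 0"
      by (simp add: trig_inner_diff_left u continuous_intros trig_inner_fourier_partial_jacobi_cos[OF a])
    then show "c m * trig_inner a (jacobi_cos a m) (\<lambda>t. u t - fourier_partial a u n t) = 0"
      by (simp add: trig_inner_commute)
  qed
  finally show ?thesis .
qed

lemma trig_inner_fourier_residual_self:
  assumes a: "a = 1/2 \<or> a = -1/2" and u: "continuous_on {0..pi} u"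
  shows "trig_inner a (\<lambda>t. u t - fourier_partial a u n t) (\<lambda>t. u t - fourier_partial a u n t) =
         trig_inner a u u - (\<Sum>m<n. fourier_coeff a u m * trig_inner a u (jacobi_cos a m))"
proof -
  let ?w = "\<lambda>t. u t - fourier_partial a u n t"
  let ?S = "fourier_partial a u n"
  have S: "continuous_on {0..pi} ?S" and w: "continuous_on {0..pi} ?w"
    by (intro continuous_intros u)+
  have "trig_inner a ?S ?w = 0"
    using trig_inner_fourier_residual[OF a u, of n "fourier_coeff a u"]
    by (simp add: trig_inner_commute fourier_partial_def)
  then have "trig_inner a ?w ?w = trig_inner a ?w u"
    by (simp add: trig_inner_diff_left[OF u S w] trig_inner_commute)
  also have "\<dots> = trig_inner a u u - trig_inner a ?S u"
    by (rule trig_inner_diff_left[OF u S u])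
  also have "trig_inner a ?S u = (\<Sum>m<n. fourier_coeff a u m * trig_inner a u (jacobi_cos a m))"
    unfolding fourier_partial_def
    by (subst trig_inner_sum_left) (auto intro: continuous_intros u simp: trig_inner_commute)
  finally show ?thesis .
qed

lemma fourier_partial_best_approximation:
  assumes a: "a = 1/2 \<or> a = -1/2" and u: "continuous_on {0..pi} u"
  shows "trig_inner a (\<lambda>t. u t - fourier_partial a u n t) (\<lambda>t. u t - fourier_partial a u n t) \<le>
         trig_inner a (\<lambda>t. u t - (\<Sum>m<n. c m * jacobi_cos a m t))
                      (\<lambda>t. u t - (\<Sum>m<n. c m * jacobi_cos a m t))"
proof -
  let ?w = "\<lambda>t. u t - fourier_partial a u n t"
  define r where "r t = (\<Sum>m<n. (fourier_coeff a u m - c m) * jacobi_cos a m t)" for t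
  have w: "continuous_on {0..pi} ?w" and r: "continuous_on {0..pi} r"
    unfolding r_def by (intro continuous_intros u)+
  have "(\<lambda>t. u t - (\<Sum>m<n. c m * jacobi_cos a m t)) = (\<lambda>t. ?w t + r t)"
    by (auto simp: fun_eq_iff fourier_partial_def r_def left_diff_distrib sum_subtractf)
  moreover have "trig_inner a ?w r = 0"
    unfolding r_def by (rule trig_inner_fourier_residual[OF a u])
  ultimately show ?thesis
    using trig_inner_add_add[OF w r, of a] trig_inner_self_nonneg[of a r] by simp
qed

lemma fourier_residual_tendsto_zero:
  assumes a: "a = 1/2 \<or> a = -1/2" and G: "continuous_on {-1..1} G"
  defines "u \<equiv> \<lambda>t. G (cos t)"
  shows "(\<lambda>n. trig_inner a (\<lambda>t. u t - fourier_partial a u n t) (\<lambda>t. u t - fourier_partial a u n t))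
           \<longlonglongrightarrow> 0"
proof (rule LIMSEQ_I)
  fix e :: real assume e: "e > 0"
  have u: "continuous_on {0..pi} u"
    unfolding u_def by (rule continuous_on_comp_cos[OF G])
  define R where "R = integral {0..pi} (trig_weight a)"
  have R: "R \<ge> 0"
    unfolding R_def
    by (rule integral_nonneg) (auto intro!: integrable_continuous_real continuous_intros trig_weight_nonneg)
  define d where "d = sqrt (e / (R + 1))"
  have d: "d > 0" and "d^2 = e / (R + 1)"
    using e R by (simp_all add: d_def)
  then have d: "d > 0" and "d^2 * R + d^2 = e"
    using R by (simp_all add: field_simps)
  moreover have "0 < d^2"
    using d by simp
  ultimately have dR: "d^2 * R < e"
    by linarith
  obtain p where p: "p \<in> jacobi_span a" "\<forall>t\<in>{0..pi}. \<bar>u t - p (cos t)\<bar> \<le> d"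
    using jacobi_span_dense_cos[OF G d] unfolding u_def by blast
  obtain K c where Kc: "\<forall>n\<ge>K. \<forall>x. p x = (\<Sum>m<n. c m * jacobi_rec a m x)"
    using jacobi_span_expansion[OF p(1)] by blast
  show "\<exists>n0. \<forall>n\<ge>n0. norm (trig_inner a (\<lambda>t. u t - fourier_partial a u n t)
                                    (\<lambda>t. u t - fourier_partial a u n t) - 0) < e"
  proof (intro exI allI impI)
    fix n assume n: "K \<le> n"
    let ?q = "\<lambda>t. u t - (\<Sum>m<n. c m * jacobi_cos a m t)"
    have q: "\<bar>?q t\<bar> \<le> d" if "t \<in> {0..pi}" for t
      using p(2) that Kc n by (simp add: jacobi_cos_def)
    have "trig_inner a (\<lambda>t. u t - fourier_partial a u n t) (\<lambda>t. u t - fourier_partial a u n t)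
          \<le> trig_inner a ?q ?q"
      by (rule fourier_partial_best_approximation[OF a u])
    also have "\<dots> \<le> d^2 * R"
      unfolding R_def by (rule trig_inner_self_le[OF _ q]) (intro continuous_intros u)
    finally show "norm (trig_inner a (\<lambda>t. u t - fourier_partial a u n t)
                                    (\<lambda>t. u t - fourier_partial a u n t) - 0) < e"
      using dR trig_inner_self_nonneg by simp
  qed
qed

lemma fourier_parseval_self:
  assumes a: "a = 1/2 \<or> a = -1/2" and G: "continuous_on {-1..1} G"
  defines "u \<equiv> \<lambda>t. G (cos t)"
  shows "(\<lambda>m. fourier_coeff a u m * trig_inner a u (jacobi_cos a m)) sums trig_inner a u u"
proof -
  have u: "continuous_on {0..pi} u"
    unfolding u_def by (rule continuous_on_comp_cos[OF G])
  have "(\<lambda>n. trig_inner a (\<lambda>t. u t - fourier_partial a u n t) (\<lambda>t. u t - fourier_partial a u n t))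
        \<longlonglongrightarrow> 0"
    using fourier_residual_tendsto_zero[OF a G] by (simp add: u_def)
  then have "(\<lambda>n. trig_inner a u u - trig_inner a (\<lambda>t. u t - fourier_partial a u n t)
                                              (\<lambda>t. u t - fourier_partial a u n t))
        \<longlonglongrightarrow> trig_inner a u u - 0"
    by (intro tendsto_diff tendsto_const)
  then show ?thesis
    by (simp add: sums_def trig_inner_fourier_residual_self[OF a u])
qed

lemma summable_norm_weighted_product:
  fixes w A B :: "nat \<Rightarrow> real"
  assumes w: "\<And>m. w m \<ge> 0"
    and "summable (\<lambda>m. w m * A m * A m)" "summable (\<lambda>m. w m * B m * B m)"
  shows "summable (\<lambda>m. norm (w m * A m * B m))"
proof (rule summable_comparison_test'[OF summable_add[OF assms(2,3)]])
  fix m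
  have "2 * \<bar>A m\<bar> * \<bar>B m\<bar> \<le> \<bar>A m\<bar>^2 + \<bar>B m\<bar>^2"
    by (rule sum_squares_bound)
  then have "2 * \<bar>A m * B m\<bar> \<le> A m * A m + B m * B m"
    by (simp add: abs_mult power2_eq_square)
  moreover have "0 \<le> \<bar>A m * B m\<bar>"
    by simp
  ultimately have "\<bar>A m * B m\<bar> \<le> A m * A m + B m * B m"
    by linarith
  from mult_left_mono[OF this w]
  show "norm (norm (w m * A m * B m)) \<le> w m * A m * A m + w m * B m * B m"
    using w[of m] by (simp add: abs_mult algebra_simps)
qed

lemma fourier_parseval:
  assumes a: "a = 1/2 \<or> a = -1/2" and G: "continuous_on {-1..1} G" and H: "continuous_on {-1..1} H"
  defines "u \<equiv> \<lambda>t. G (cos t)" and "v \<equiv> \<lambda>t. H (cos t)"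
  shows "((\<lambda>m. fourier_coeff a u m * trig_inner a v (jacobi_cos a m)) has_sum trig_inner a u v) UNIV"
proof -
  have u: "continuous_on {0..pi} u" and v: "continuous_on {0..pi} v"
    unfolding u_def v_def by (intro continuous_on_comp_cos G H)+
  define A where "A m = trig_inner a u (jacobi_cos a m)" for m
  define B where "B m = trig_inner a v (jacobi_cos a m)" for m
  define w where "w m = Wt a m / pi" for m
  have w: "w m > 0" for m
    using Wt_pos[of a m] by (simp add: w_def)
  have PA: "(\<lambda>m. w m * A m * A m) sums trig_inner a u u"
    using fourier_parseval_self[OF a G] by (simp add: u_def A_def w_def fourier_coeff_def)
  have PB: "(\<lambda>m. w m * B m * B m) sums trig_inner a v v"
    using fourier_parseval_self[OF a H] by (simp add: v_def B_def w_def fourier_coeff_def)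
  have GH: "continuous_on {-1..1} (\<lambda>x. G x + H x)"
    by (intro continuous_intros G H)
  have PAB: "(\<lambda>m. w m * (A m + B m) * (A m + B m)) sums
             (trig_inner a u u + 2 * trig_inner a u v + trig_inner a v v)"
  proof -
    have "(\<lambda>t. G (cos t) + H (cos t)) = (\<lambda>t. u t + v t)"
      by (simp add: u_def v_def)
    with fourier_parseval_self[OF a GH] show ?thesis
      by (simp add: A_def B_def w_def fourier_coeff_def trig_inner_add_left[OF u v continuous_on_jacobi_cos]
          trig_inner_add_add[OF u v])
  qed
  \<comment> \<open>Polarization.\<close>
  have "(\<lambda>m. (w m * (A m + B m) * (A m + B m) - w m * A m * A m - w m * B m * B m) / 2) sums
        (((trig_inner a u u + 2 * trig_inner a u v + trig_inner a v v)
          - trig_inner a u u - trig_inner a v v) / 2)"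
    by (intro sums_divide sums_diff PAB PA PB)
  then have S: "(\<lambda>m. w m * A m * B m) sums trig_inner a u v"
    by (simp add: algebra_simps)
  have "summable (\<lambda>m. norm (w m * A m * B m))"
    using w by (intro summable_norm_weighted_product sums_summable[OF PA] sums_summable[OF PB] less_imp_le)
  from norm_summable_imp_has_sum[OF this S] show ?thesis
    by (simp add: A_def B_def w_def fourier_coeff_def)
qed

section \<open>The coefficients f and I as Fourier coefficients\<close>

lemma set_integral_weight_Jac:
  assumes a: "a = 1/2 \<or> a = -1/2" and G: "continuous_on {-1..1} G"
  shows "(LINT x:{-1..1}|lborel. G x * Jac a k x * weight a x) =
         trig_inner a (\<lambda>t. G (cos t)) (jacobi_cos a k)"
proof -
  have "continuous_on {-1..1} (\<lambda>x. G x * Jac a k x)"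
    by (intro continuous_intros G continuous_on_Jac)
  from set_integral_weight_eq_integral_cos[OF a this] show ?thesis
    by (simp add: trig_inner_def jacobi_cos_def Jac_eq_jacobi_rec)
qed

lemma fcoef_eq_fourier_coeff:
  assumes a: "a = 1/2 \<or> a = -1/2" and F: "continuous_on {-1..1} F"
  shows "fcoef a N j F k = fourier_coeff a (\<lambda>t. cos t ^ (N - j) * F (cos t)) k"
  using set_integral_weight_Jac[OF a, of "\<lambda>x. x ^ (N - j) * F x" k] F
  by (simp add: fcoef_def fourier_coeff_def continuous_intros)

lemma Icoef_eq_trig_inner:
  assumes a: "a = 1/2 \<or> a = -1/2" and \<phi>: "continuous_on {-1..1} \<phi>"
  shows "Icoef a \<phi> m l = Wt a l / pi * trig_inner a (\<lambda>t. jacobi_cos a l t * \<phi> (cos t)) (jacobi_cos a m)"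
proof -
  have "continuous_on {-1..1} (\<lambda>x. Jac a l x * \<phi> x)"
    by (intro continuous_intros \<phi> continuous_on_Jac)
  from set_integral_weight_Jac[OF a this, of m] show ?thesis
    by (simp add: Icoef_def mult_ac jacobi_cos_def Jac_eq_jacobi_rec)
qed

lemma has_sum_Icoef_fcoef:
  assumes a: "a = 1/2 \<or> a = -1/2" and E: "continuous_on {-1..1} E" and \<phi>: "continuous_on {-1..1} \<phi>"
  shows "((\<lambda>m. Icoef a \<phi> m l * fcoef a N j E m) has_sum fcoef a N j (\<lambda>x. E x * \<phi> x) l) UNIV"
proof -
  define G where "G x = x ^ (N - j) * E x" for x
  define H where "H x = jacobi_rec a l x * \<phi> x" for x
  have G: "continuous_on {-1..1} G" and H: "continuous_on {-1..1} H"
    unfolding G_def H_def by (intro continuous_intros E \<phi>)+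
  have "((\<lambda>m. Wt a l / pi * (fourier_coeff a (\<lambda>t. G (cos t)) m * trig_inner a (\<lambda>t. H (cos t)) (jacobi_cos a m)))
        has_sum Wt a l / pi * trig_inner a (\<lambda>t. G (cos t)) (\<lambda>t. H (cos t))) UNIV"
    by (intro has_sum_cmult_right fourier_parseval[OF a G H])
  moreover have "Icoef a \<phi> m l * fcoef a N j E m =
      Wt a l / pi * (fourier_coeff a (\<lambda>t. G (cos t)) m * trig_inner a (\<lambda>t. H (cos t)) (jacobi_cos a m))" for m
    by (simp add: Icoef_eq_trig_inner[OF a \<phi>] fcoef_eq_fourier_coeff[OF a E] G_def H_def jacobi_cos_def)
  moreover have "fcoef a N j (\<lambda>x. E x * \<phi> x) l = Wt a l / pi * trig_inner a (\<lambda>t. G (cos t)) (\<lambda>t. H (cos t))"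
    using E \<phi>
    by (simp add: fcoef_eq_fourier_coeff[OF a] continuous_intros fourier_coeff_def trig_inner_def
        G_def H_def jacobi_cos_def mult_ac)
  ultimately show ?thesis
    by simp
qed

section \<open>Strictly decreasing tuples\<close>

definition dec_tuples :: "nat \<Rightarrow> (nat \<Rightarrow> nat) set" where
  "dec_tuples N = {s \<in> PiE {1..N} (\<lambda>_. UNIV). \<forall>i\<in>{1..N}. \<forall>j\<in>{1..N}. i < j \<longrightarrow> s j < s i}"

lemma dec_tuplesD:
  "s \<in> dec_tuples N \<Longrightarrow> i \<in> {1..N} \<Longrightarrow> j \<in> {1..N} \<Longrightarrow> i < j \<Longrightarrow> s j < s i"
  unfolding dec_tuples_def by blast

lemma dec_tuples_inj_on:
  assumes "s \<in> dec_tuples N"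
  shows "inj_on s {1..N}"
proof (rule inj_onI)
  fix i j assume ij: "i \<in> {1..N}" "j \<in> {1..N}" "s i = s j"
  show "i = j"
  proof (rule ccontr)
    assume "i \<noteq> j"
    then have "i < j \<or> j < i" by arith
    with dec_tuplesD[OF assms] ij show False by force
  qed
qed

lemma dec_tuples_list:
  assumes "s \<in> dec_tuples N"
  shows "sorted_wrt (<) (rev (map s [1..<Suc N]))"
  unfolding sorted_wrt_rev sorted_wrt_map
  by (rule sorted_wrt_mono_rel[OF _ sorted_wrt_upt]) (use assms in \<open>auto simp: dec_tuples_def\<close>)

lemma dec_tuples_image_eq:
  assumes s: "s \<in> dec_tuples N" and s': "s' \<in> dec_tuples N" and im: "s ` {1..N} = s' ` {1..N}"
  shows "s = s'"
proof (rule PiE_ext)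
  show "s \<in> PiE {1..N} (\<lambda>_. UNIV)" "s' \<in> PiE {1..N} (\<lambda>_. UNIV)"
    using s s' by (auto simp: dec_tuples_def)
  have "set (rev (map s' [1..<Suc N])) = set (rev (map s [1..<Suc N]))"
    by (simp only: set_rev set_map set_upt atLeastLessThanSuc_atLeastAtMost im)
  from strict_sorted_equal[OF dec_tuples_list[OF s] dec_tuples_list[OF s'] this]
  have "map s [1..<Suc N] = map s' [1..<Suc N]"
    by simp
  then have "\<forall>x\<in>{1..<Suc N}. s x = s' x"
    by (simp only: map_eq_conv set_upt)
  then show "s i = s' i" if "i \<in> {1..N}" for i
    using that by (simp add: atLeastLessThanSuc_atLeastAtMost)
qed

lemma dec_tuples_enumerate:
  assumes "finite K" "card K = N"
  obtains s where "s \<in> dec_tuples N" "s ` {1..N} = K"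
proof
  define L where "L = rev (sorted_list_of_set K)"
  have L: "length L = N" "set L = K" "sorted_wrt (>) L"
    using assms by (simp_all add: L_def sorted_wrt_rev)
  define s where "s i = (if i \<in> {1..N} then L ! (i - 1) else undefined)" for i
  have "s \<in> PiE {1..N} (\<lambda>_. UNIV)"
    by (auto simp: s_def PiE_def extensional_def)
  moreover have "s j < s i" if "i \<in> {1..N}" "j \<in> {1..N}" "i < j" for i j
    using sorted_wrt_nth_less[OF L(3), of "i - 1" "j - 1"] L(1) that by (simp add: s_def)
  ultimately show "s \<in> dec_tuples N"
    by (simp add: dec_tuples_def)
  have "s ` {1..N} = s ` Suc ` {..<N}"
    by (simp add: image_Suc_lessThan)
  also have "\<dots> = (\<lambda>i. L ! i) ` {..<N}"
    unfolding image_image by (intro image_cong refl) (simp add: s_def)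
  also have "\<dots> = K"
    using L(1,2) nth_image[of N L] by (simp add: lessThan_atLeast0)
  finally show "s ` {1..N} = K" .
qed

lemma inj_tuple_decompose:
  fixes k :: "nat \<Rightarrow> nat"
  assumes k: "k \<in> PiE {1..N} (\<lambda>_. UNIV)" "inj_on k {1..N}"
  obtains s p where "s \<in> dec_tuples N" "p permutes {1..N}" "k = s \<circ> p"
proof -
  have "card (k ` {1..N}) = N"
    using card_image[OF k(2)] by simp
  then obtain s where s: "s \<in> dec_tuples N" "s ` {1..N} = k ` {1..N}"
    by (rule dec_tuples_enumerate[OF finite_imageI[OF finite_atLeastAtMost]])
  have bij_s: "bij_betw s {1..N} (k ` {1..N})"
    using dec_tuples_inj_on[OF s(1)] s(2) by (simp add: bij_betw_def)
  define p where "p i = (if i \<in> {1..N} then inv_into {1..N} s (k i) else i)" for i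
  have "bij_betw (inv_into {1..N} s \<circ> k) {1..N} {1..N}"
    using bij_betw_trans[OF inj_on_imp_bij_betw[OF k(2)] bij_betw_inv_into[OF bij_s]] .
  then have "bij_betw p {1..N} {1..N}"
    by (rule bij_betw_cong[THEN iffD1, rotated]) (simp add: p_def)
  then have p: "p permutes {1..N}"
    by (rule bij_imp_permutes) (auto simp: p_def)
  have "k = s \<circ> p"
  proof
    fix i
    show "k i = (s \<circ> p) i"
    proof (cases "i \<in> {1..N}")
      case True
      then show ?thesis
        using s(2) by (simp add: p_def f_inv_into_f[of "k i" s])
    next
      case False
      then show ?thesis
        using k(1) s(1) by (auto simp: p_def dec_tuples_def PiE_def extensional_def)
    qed
  qed
  with s(1) p show ?thesis ..
qed

lemma dec_tuples_comp_permutes_eq: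
  assumes s: "s \<in> dec_tuples N" "s' \<in> dec_tuples N" and p: "p permutes {1..N}" "p' permutes {1..N}"
    and comp: "s \<circ> p = s' \<circ> p'"
  shows "s = s' \<and> p = p'"
proof
  have "s ` {1..N} = (s \<circ> p) ` {1..N}"
    using permutes_image[OF p(1)] by (metis image_comp)
  also have "\<dots> = s' ` {1..N}"
    using permutes_image[OF p(2)] comp by (metis image_comp)
  finally show "s = s'"
    by (rule dec_tuples_image_eq[OF s])
  show "p = p'"
  proof
    fix i
    show "p i = p' i"
    proof (cases "i \<in> {1..N}")
      case True
      have "s (p i) = s (p' i)"
        using comp \<open>s = s'\<close> by (metis comp_apply)
      moreover have "p i \<in> {1..N}" "p' i \<in> {1..N}"
        using True permutes_in_image[OF p(1)] permutes_in_image[OF p(2)] by auto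
      ultimately show ?thesis
        by (rule inj_onD[OF dec_tuples_inj_on[OF s(1)]])
    next
      case False
      then show ?thesis
        using permutes_not_in[OF p(1)] permutes_not_in[OF p(2)] by simp
    qed
  qed
qed

lemma dec_tuples_comp_permutes_inj_on:
  assumes s: "s \<in> dec_tuples N" and p: "p permutes {1..N}"
  shows "s \<circ> p \<in> PiE {1..N} (\<lambda>_. UNIV)" "inj_on (s \<circ> p) {1..N}"
proof -
  show "s \<circ> p \<in> PiE {1..N} (\<lambda>_. UNIV)"
    using s permutes_not_in[OF p] by (auto simp: dec_tuples_def PiE_def extensional_def)
  show "inj_on (s \<circ> p) {1..N}"
    using dec_tuples_inj_on[OF s] permutes_inj_on[OF p] permutes_image[OF p]
    by (intro comp_inj_on) auto
qed

lemma bij_betw_dec_tuples_permutes: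
  "bij_betw (\<lambda>(s, p). s \<circ> p) (dec_tuples N \<times> {p. p permutes {1..N}})
     {k \<in> PiE {1..N} (\<lambda>_. UNIV). inj_on k {1..N}}"
proof (rule bij_betw_imageI)
  show "inj_on (\<lambda>(s, p). s \<circ> p) (dec_tuples N \<times> {p. p permutes {1..N}})"
    by (rule inj_onI) (use dec_tuples_comp_permutes_eq in auto)
  show "(\<lambda>(s, p). s \<circ> p) ` (dec_tuples N \<times> {p. p permutes {1..N}}) =
        {k \<in> PiE {1..N} (\<lambda>_. UNIV). inj_on k {1..N}}"
  proof (rule subset_antisym)
    show "(\<lambda>(s, p). s \<circ> p) ` (dec_tuples N \<times> {p. p permutes {1..N}}) \<subseteq>
          {k \<in> PiE {1..N} (\<lambda>_. UNIV). inj_on k {1..N}}"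
    proof
      fix k assume "k \<in> (\<lambda>(s, p). s \<circ> p) ` (dec_tuples N \<times> {p. p permutes {1..N}})"
      then obtain s p where "s \<in> dec_tuples N" "p permutes {1..N}" "k = s \<circ> p"
        by auto
      then show "k \<in> {k \<in> PiE {1..N} (\<lambda>_. UNIV). inj_on k {1..N}}"
        using dec_tuples_comp_permutes_inj_on[of s N p] by simp
    qed
    show "{k \<in> PiE {1..N} (\<lambda>_. UNIV). inj_on k {1..N}} \<subseteq>
          (\<lambda>(s, p). s \<circ> p) ` (dec_tuples N \<times> {p. p permutes {1..N}})"
    proof
      fix k :: "nat \<Rightarrow> nat" assume "k \<in> {k \<in> PiE {1..N} (\<lambda>_. UNIV). inj_on k {1..N}}"
      then obtain s p where "s \<in> dec_tuples N" "p permutes {1..N}" "k = s \<circ> p"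
        using inj_tuple_decompose[of k N] by auto
      then show "k \<in> (\<lambda>(s, p). s \<circ> p) ` (dec_tuples N \<times> {p. p permutes {1..N}})"
        by auto
    qed
  qed
qed

section \<open>The Cauchy-Binet formula for series\<close>

lemma detN_cong:
  assumes "\<And>i j. i \<in> {1..N} \<Longrightarrow> j \<in> {1..N} \<Longrightarrow> M i j = M' i j"
  shows "detN N M = detN N M'"
  unfolding detN_def
proof (rule sum.cong[OF refl])
  fix p assume "p \<in> {p. p permutes {1..N}}"
  then show "of_int (sign p) * (\<Prod>i = 1..N. M i (p i)) = of_int (sign p) * (\<Prod>i = 1..N. M' i (p i))"
    using assms permutes_in_image[of p "{1..N}"] by (auto intro!: prod.cong)
qed

lemma detN_permute_rows:
  assumes t: "t permutes {1..N}"
  shows "detN N (\<lambda>i j. M (t i) j) = of_int (sign t) * detN N M"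
proof -
  let ?U = "{1..N}"
  have "(\<Prod>i\<in>?U. M (t i) ((q \<circ> t) i)) = (\<Prod>i\<in>?U. M i (q i))" for q
    using prod.reindex_bij_betw[OF permutes_imp_bij[OF t], of "\<lambda>i. M i (q i)"] by simp
  moreover have "sign (q \<circ> t) = sign q * sign t" if "q permutes ?U" for q
    using sign_compose that t permutation_permutes by blast
  ultimately have "(\<Sum>q | q permutes ?U. of_int (sign (q \<circ> t)) * (\<Prod>i\<in>?U. M (t i) ((q \<circ> t) i))) =
                   (\<Sum>q | q permutes ?U. of_int (sign t) * (of_int (sign q) * (\<Prod>i\<in>?U. M i (q i))))"
    by (intro sum.cong) auto
  then show ?thesis
    unfolding detN_def sum_permutations_compose_right[OF t, of "\<lambda>q. of_int (sign q) * (\<Prod>i\<in>?U. M (t i) (q i))"]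
    by (simp add: sum_distrib_left)
qed

lemma detN_transpose: "detN N (\<lambda>i j. M j i) = detN N M"
proof -
  let ?U = "{1..N}"
  have "of_int (sign (inv p)) * (\<Prod>i\<in>?U. M (inv p i) i) = of_int (sign p) * (\<Prod>i\<in>?U. M i (p i))"
    if p: "p permutes ?U" for p
  proof -
    have "(\<Prod>i\<in>?U. M (inv p i) i) = (\<Prod>i\<in>?U. M (inv p (p i)) (p i))"
      using prod.reindex_bij_betw[OF permutes_imp_bij[OF p], of "\<lambda>i. M (inv p i) i"] by simp
    then show ?thesis
      using sign_inverse[OF permutation_permutes[THEN iffD2]] p permutes_inverses(2)[OF p]
      by (auto simp: finite_atLeastAtMost)
  qed
  then show ?thesis
    unfolding detN_def by (subst sum_permutations_inverse) (auto intro: sum.cong)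
qed

lemma detN_eq_rows:
  assumes "i \<in> {1..N}" "k \<in> {1..N}" "i \<noteq> k" "\<And>j. M i j = M k j"
  shows "detN N M = 0"
proof -
  let ?t = "Transposition.transpose i k"
  have "(\<lambda>i' j. M (?t i') j) = M"
    using assms(4) by (auto simp: fun_eq_iff Transposition.transpose_def)
  then have "detN N M = - detN N M"
    using detN_permute_rows[OF permutes_swap_id[OF assms(1,2)], of M] assms(3)
    by (simp add: sign_swap_id)
  then show ?thesis by simp
qed

lemma has_sum_sum:
  fixes f :: "'i \<Rightarrow> 'a \<Rightarrow> 'b::topological_comm_monoid_add"
  assumes "finite I" "\<And>i. i \<in> I \<Longrightarrow> (f i has_sum s i) A"
  shows "((\<lambda>x. \<Sum>i\<in>I. f i x) has_sum (\<Sum>i\<in>I. s i)) A"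
  using assms by (induction I rule: finite_induct) (auto intro: has_sum_add)

lemma summable_on_product_real:
  fixes f g :: "_ \<Rightarrow> real"
  assumes f: "f summable_on A" and g: "g summable_on B"
  shows "(\<lambda>(x, y). f x * g y) summable_on A \<times> B"
proof -
  have f': "(\<lambda>x. \<bar>f x\<bar>) summable_on A" and g': "(\<lambda>y. \<bar>g y\<bar>) summable_on B"
    using f g summable_on_iff_abs_summable_on_real by auto
  have "(\<lambda>z. norm ((\<lambda>(x, y). f x * g y) z)) summable_on Sigma A (\<lambda>_. B)"
  proof (rule Infinite_Sum.abs_summable_on_Sigma_iff[THEN iffD2], intro conjI ballI)
    fix x assume "x \<in> A"
    show "(\<lambda>y. norm ((\<lambda>(x, y). f x * g y) (x, y))) summable_on B"
      using summable_on_cmult_right[OF g', of "\<bar>f x\<bar>"] by (simp add: abs_mult)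
  next
    have "(\<lambda>x. \<bar>f x\<bar> * infsum (\<lambda>y. \<bar>g y\<bar>) B) summable_on A"
      by (rule summable_on_cmult_left[OF f'])
    moreover have "infsum (\<lambda>y. \<bar>g y\<bar>) B \<ge> 0"
      by (rule infsum_nonneg) auto
    ultimately show "(\<lambda>x. norm (infsum (\<lambda>y. norm ((\<lambda>(x, y). f x * g y) (x, y))) B)) summable_on A"
      by (simp add: abs_mult infsum_cmult_right')
  qed
  then show ?thesis
    by (rule summable_on_iff_abs_summable_on_real[THEN iffD2])
qed

lemma summable_on_prod_PiE_real:
  fixes f :: "'i \<Rightarrow> 'a \<Rightarrow> real"
  assumes "finite A" "\<And>i. i \<in> A \<Longrightarrow> f i summable_on B i"
  shows "(\<lambda>k. \<Prod>i\<in>A. f i (k i)) summable_on PiE A B"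
  using assms
proof (induction A rule: finite_induct)
  case (insert x F)
  define g :: "('i \<Rightarrow> 'a) \<times> 'a \<Rightarrow> 'i \<Rightarrow> 'a" where "g = (\<lambda>(p, y). p(x := y))"
  have inj: "inj_on g (PiE F B \<times> B x)"
    unfolding g_def by (rule inj_combinator'[OF insert.hyps(2)])
  have img: "PiE (insert x F) B = g ` (PiE F B \<times> B x)"
    unfolding PiE_insert_eq g_def
    by (subst swap_product [symmetric]) (simp add: image_image case_prod_unfold)
  have "(\<lambda>k. \<Prod>i\<in>insert x F. f i (k i)) \<circ> g = (\<lambda>(p, y). (\<Prod>i\<in>F. f i (p i)) * f x y)"
  proof (rule ext, clarify)
    fix p y
    have "(\<Prod>i\<in>F. f i ((p(x := y)) i)) = (\<Prod>i\<in>F. f i (p i))"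
      using insert.hyps by (intro prod.cong) auto
    then show "((\<lambda>k. \<Prod>i\<in>insert x F. f i (k i)) \<circ> g) (p, y) = (\<Prod>i\<in>F. f i (p i)) * f x y"
      using insert.hyps by (simp add: g_def mult.commute)
  qed
  moreover have "(\<lambda>(p, y). (\<Prod>i\<in>F. f i (p i)) * f x y) summable_on PiE F B \<times> B x"
    using insert by (intro summable_on_product_real) auto
  ultimately show ?case
    unfolding img by (subst summable_on_reindex[OF inj]) simp
qed simp

lemma has_sum_prod_PiE_real:
  fixes f :: "'i \<Rightarrow> 'a \<Rightarrow> real"
  assumes A: "finite A" and f: "\<And>i. i \<in> A \<Longrightarrow> (f i has_sum s i) (B i)"
  shows "((\<lambda>k. \<Prod>i\<in>A. f i (k i)) has_sum (\<Prod>i\<in>A. s i)) (PiE A B)"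
proof -
  have summable: "f i summable_on B i" if "i \<in> A" for i
    using f[OF that] by (rule has_sum_imp_summable)
  have "infsum (\<lambda>k. \<Prod>i\<in>A. f i (k i)) (PiE A B) = (\<Prod>i\<in>A. infsum (f i) (B i))"
    by (rule infsum_prod_PiE_abs[OF A]) (use summable summable_on_iff_abs_summable_on_real in auto)
  also have "\<dots> = (\<Prod>i\<in>A. s i)"
    using f by (auto intro!: prod.cong infsumI)
  finally show ?thesis
    using summable_on_prod_PiE_real[OF A summable] by (simp add: has_sum_iff)
qed

lemma has_sum_detN_tuples:
  fixes X Y Z :: "nat \<Rightarrow> nat \<Rightarrow> real"
  assumes XY: "\<And>i j. i \<in> {1..N} \<Longrightarrow> j \<in> {1..N} \<Longrightarrow> ((\<lambda>m. X i m * Y j m) has_sum Z i j) UNIV"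
  shows "((\<lambda>k. (\<Prod>i\<in>{1..N}. X i (k i)) * detN N (\<lambda>i j. Y j (k i))) has_sum detN N Z)
           (PiE {1..N} (\<lambda>_. UNIV))"
proof -
  have "((\<lambda>k. \<Sum>p | p permutes {1..N}. of_int (sign p) * (\<Prod>i\<in>{1..N}. X i (k i) * Y (p i) (k i)))
         has_sum (\<Sum>p | p permutes {1..N}. of_int (sign p) * (\<Prod>i\<in>{1..N}. Z i (p i))))
         (PiE {1..N} (\<lambda>_. UNIV))"
  proof (intro has_sum_sum has_sum_cmult_right has_sum_prod_PiE_real)
    fix p i assume "p \<in> {p. p permutes {1..N}}" "i \<in> {1..N}"
    then have "i \<in> {1..N}" "p i \<in> {1..N}"
      by (auto dest: permutes_in_image[THEN iffD2])
    then show "((\<lambda>m. X i m * Y (p i) m) has_sum Z i (p i)) UNIV"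
      by (rule XY)
  qed (auto simp: finite_permutations)
  then show ?thesis
    by (simp add: detN_def prod.distrib sum_distrib_left mult_ac)
qed

lemma has_sum_detN_inj_tuples:
  fixes X Y Z :: "nat \<Rightarrow> nat \<Rightarrow> real"
  assumes XY: "\<And>i j. i \<in> {1..N} \<Longrightarrow> j \<in> {1..N} \<Longrightarrow> ((\<lambda>m. X i m * Y j m) has_sum Z i j) UNIV"
  shows "((\<lambda>k. (\<Prod>i\<in>{1..N}. X i (k i)) * detN N (\<lambda>i j. Y j (k i))) has_sum detN N Z)
           {k \<in> PiE {1..N} (\<lambda>_. UNIV). inj_on k {1..N}}"
proof (rule has_sum_cong_neutral[THEN iffD1, OF _ _ _ has_sum_detN_tuples[OF XY]])
  fix k :: "nat \<Rightarrow> nat" assume "k \<in> PiE {1..N} (\<lambda>_. UNIV) - {k \<in> PiE {1..N} (\<lambda>_. UNIV). inj_on k {1..N}}"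
  then obtain i i' where "i \<in> {1..N}" "i' \<in> {1..N}" "i \<noteq> i'" "k i = k i'"
    by (auto simp: inj_on_def)
  then have "detN N (\<lambda>i j. Y j (k i)) = 0"
    by (intro detN_eq_rows[of i N i']) auto
  then show "(\<Prod>i\<in>{1..N}. X i (k i)) * detN N (\<lambda>i j. Y j (k i)) = 0"
    by simp
qed auto

lemma has_sum_detN_dec_tuples:
  fixes X Y Z :: "nat \<Rightarrow> nat \<Rightarrow> real"
  assumes XY: "\<And>i j. i \<in> {1..N} \<Longrightarrow> j \<in> {1..N} \<Longrightarrow> ((\<lambda>m. X i m * Y j m) has_sum Z i j) UNIV"
  shows "((\<lambda>s. detN N (\<lambda>i j. X j (s i)) * detN N (\<lambda>i j. Y j (s i))) has_sum detN N Z) (dec_tuples N)"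
proof -
  define H where "H k = (\<Prod>i\<in>{1..N}. X i (k i)) * detN N (\<lambda>i j. Y j (k i))" for k
  have "(H has_sum detN N Z) {k \<in> PiE {1..N} (\<lambda>_. UNIV). inj_on k {1..N}}"
    unfolding H_def by (rule has_sum_detN_inj_tuples[OF XY])
  then have "((\<lambda>x. H ((\<lambda>(s, p). s \<circ> p) x)) has_sum detN N Z) (dec_tuples N \<times> {p. p permutes {1..N}})"
    by (subst has_sum_reindex_bij_betw[OF bij_betw_dec_tuples_permutes])
  then have "((\<lambda>(s, p). H (s \<circ> p)) has_sum detN N Z) (dec_tuples N \<times> {p. p permutes {1..N}})"
    by (simp add: case_prod_unfold)
  then have "((\<lambda>s. \<Sum>p | p permutes {1..N}. H (s \<circ> p)) has_sum detN N Z) (dec_tuples N)"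
    by (rule has_sum_Sigma') (simp add: finite_permutations)
  moreover have "(\<Sum>p | p permutes {1..N}. H (s \<circ> p)) =
                 detN N (\<lambda>i j. X j (s i)) * detN N (\<lambda>i j. Y j (s i))" for s
  proof -
    have "H (s \<circ> p) = of_int (sign p) * (\<Prod>i\<in>{1..N}. X i (s (p i))) * detN N (\<lambda>i j. Y j (s i))"
      if "p permutes {1..N}" for p
      using detN_permute_rows[OF that, of "\<lambda>i j. Y j (s i)"] by (simp add: H_def)
    then have "(\<Sum>p | p permutes {1..N}. H (s \<circ> p)) =
               detN N (\<lambda>i j. X i (s j)) * detN N (\<lambda>i j. Y j (s i))"
      by (simp add: detN_def sum_distrib_right)
    then show ?thesis
      by (simp add: detN_transpose[of N "\<lambda>i j. X j (s i)"])
  qed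
  ultimately show ?thesis
    by simp
qed

section \<open>Signatures and dimensions\<close>

definition shifted_signature :: "nat \<Rightarrow> nat list \<Rightarrow> nat \<Rightarrow> nat" where
  "shifted_signature N \<mu> = (\<lambda>i. if i \<in> {1..N} then \<mu> ! (i - 1) + N - i else undefined)"

lemma detN_shifted_signature:
  "detN N (\<lambda>i j. F j (shifted_signature N \<mu> i)) = detN N (\<lambda>i j. F j (\<mu> ! (i - 1) + N - i))"
  by (rule detN_cong) (simp add: shifted_signature_def)

lemma JN_nth_mono:
  assumes "\<mu> \<in> JN N" "1 \<le> i" "i \<le> j" "j \<le> N"
  shows "\<mu> ! (j - 1) \<le> \<mu> ! (i - 1)"
  using assms by (cases "i = j") (auto simp: JN_def sorted_wrt_iff_nth_less)

lemma dec_tuples_gap: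
  assumes s: "s \<in> dec_tuples N" and "1 \<le> i" "i \<le> j" "j \<le> N"
  shows "s j + (j - i) \<le> s i"
  using assms(3,4)
proof (induction j rule: dec_induct)
  case (step n)
  have "s (Suc n) < s n"
    using dec_tuplesD[OF s, of n "Suc n"] step \<open>1 \<le> i\<close> by auto
  with step show ?case by auto
qed simp

lemma shifted_signature_in_dec_tuples:
  assumes \<mu>: "\<mu> \<in> JN N"
  shows "shifted_signature N \<mu> \<in> dec_tuples N"
proof -
  have "shifted_signature N \<mu> j < shifted_signature N \<mu> i" if "i \<in> {1..N}" "j \<in> {1..N}" "i < j" for i j
    using JN_nth_mono[OF \<mu>, of i j] that by (simp add: shifted_signature_def)
  then show ?thesis
    by (auto simp: dec_tuples_def shifted_signature_def PiE_def extensional_def)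
qed

lemma dec_tuples_eq_shifted_signature:
  assumes s: "s \<in> dec_tuples N"
  obtains \<mu> where "\<mu> \<in> JN N" "s = shifted_signature N \<mu>"
proof
  define \<mu> where "\<mu> = map (\<lambda>i. s i - (N - i)) [1..<Suc N]"
  have lower: "N - i \<le> s i" if "i \<in> {1..N}" for i
    using dec_tuples_gap[OF s, of i N] that by auto
  have len: "length \<mu> = N"
    by (simp add: \<mu>_def)
  have nth: "\<mu> ! k = s (Suc k) - (N - Suc k)" if "k < N" for k
    using that by (simp add: \<mu>_def del: upt_Suc)
  show "\<mu> \<in> JN N"
    unfolding JN_def sorted_wrt_iff_nth_less
  proof (intro CollectI conjI allI impI)
    show "length \<mu> = N"
      by (rule len)
    fix k l assume "k < l" "l < length \<mu>"
    moreover have "s (Suc l) + (l - k) \<le> s (Suc k)"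
      using dec_tuples_gap[OF s, of "Suc k" "Suc l"] calculation len by simp
    ultimately show "\<mu> ! l \<le> \<mu> ! k"
      using lower[of "Suc l"] by (simp add: \<mu>_def nth del: upt_Suc)
  qed
  show "s = shifted_signature N \<mu>"
  proof (rule PiE_ext)
    show "shifted_signature N \<mu> \<in> PiE {1..N} (\<lambda>_. UNIV)"
      by (auto simp: shifted_signature_def PiE_def extensional_def)
    show "s \<in> PiE {1..N} (\<lambda>_. UNIV)"
      using s by (simp add: dec_tuples_def)
    fix i assume i: "i \<in> {1..N}"
    then have "\<mu> ! (i - 1) = s i - (N - i)"
      using nth[of "i - 1"] by auto
    then show "s i = shifted_signature N \<mu> i"
      using i lower[OF i] by (simp add: shifted_signature_def)
  qed
qed

lemma bij_betw_shifted_signature: "bij_betw (shifted_signature N) (JN N) (dec_tuples N)"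
proof (rule bij_betw_imageI)
  show "inj_on (shifted_signature N) (JN N)"
  proof (rule inj_onI)
    fix \<mu> \<mu>' assume \<mu>: "\<mu> \<in> JN N" "\<mu>' \<in> JN N" and eq: "shifted_signature N \<mu> = shifted_signature N \<mu>'"
    show "\<mu> = \<mu>'"
    proof (rule nth_equalityI)
      show "length \<mu> = length \<mu>'"
        using \<mu> by (simp add: JN_def)
      fix k assume "k < length \<mu>"
      with \<mu> eq[THEN fun_cong, of "Suc k"] show "\<mu> ! k = \<mu>' ! k"
        by (simp add: JN_def shifted_signature_def)
    qed
  qed
  show "shifted_signature N ` JN N = dec_tuples N"
    using shifted_signature_in_dec_tuples dec_tuples_eq_shifted_signature by blast
qed

lemma prod_ratio_squares_pos:
  fixes l m :: "nat \<Rightarrow> real"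
  assumes "\<And>i j. i \<in> {1..N} \<Longrightarrow> j \<in> {i<..N} \<Longrightarrow> 0 \<le> l j \<and> l j < l i \<and> 0 \<le> m j \<and> m j < m i"
  shows "(\<Prod>i\<in>{1..N}. \<Prod>j\<in>{i<..N}. (l i ^ 2 - l j ^ 2) / (m i ^ 2 - m j ^ 2)) > 0"
proof (intro prod_pos divide_pos_pos)
  fix i j assume "i \<in> {1..N}" "j \<in> {i<..N}"
  with assms[of i j] show "l i ^ 2 - l j ^ 2 > 0" "m i ^ 2 - m j ^ 2 > 0"
    by (simp_all add: power_strict_mono)
qed

lemma dimSO_pos:
  assumes a: "a = 1/2 \<or> a = -1/2" and \<mu>: "\<mu> \<in> JN N"
  shows "dimSO a N \<mu> > 0"
proof -
  have mono: "real (\<mu> ! (j - 1)) \<le> real (\<mu> ! (i - 1))" if "i \<in> {1..N}" "j \<in> {i<..N}" for i j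
    using JN_nth_mono[OF \<mu>, of i j] that by auto
  from a show ?thesis
  proof
    assume "a = 1/2"
    then show ?thesis
      unfolding dimSO_def Let_def
      by (subst if_P, simp)
         (intro mult_pos_pos prod_ratio_squares_pos prod_pos divide_pos_pos; use mono in force)
  next
    assume "a = -1/2"
    then show ?thesis
      unfolding dimSO_def Let_def
      by (subst if_not_P, simp) (intro prod_ratio_squares_pos; use mono in force)
  qed
qed

lemma C1_on_imp_continuous_on: "C1_on S F \<Longrightarrow> continuous_on S F"
  unfolding C1_on_def by (auto intro: DERIV_continuous_on)

theorem proposition3p1:
  fixes N :: nat and a :: real and E \<phi> :: "real \<Rightarrow> real" and lam :: "nat list"
  assumes "N \<ge> 1"
    and "a = 1/2 \<or> a = -1/2"
    and "C1_on {-1..1} E" and "C1_on {-1..1} \<phi>"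
    and "lam \<in> JN N"
  shows "((\<lambda>\<mu>. detN N (\<lambda>i j. Icoef a \<phi> (\<mu> ! (i - 1) + N - i) (lam ! (j - 1) + N - j))
                * (PNa a N E \<mu> / dimSO a N \<mu>))
          has_sum (PtildeNa a N E \<phi> lam / dimSO a N lam)) (JN N)"
proof -
  note a = assms(2)
  have E: "continuous_on {-1..1} E" and \<phi>: "continuous_on {-1..1} \<phi>"
    using assms(3,4) by (auto intro: C1_on_imp_continuous_on)
  define X where "X j m = Icoef a \<phi> m (lam ! (j - 1) + N - j)" for j m
  define Y where "Y j m = fcoef a N j E m" for j m
  have "((\<lambda>s. CNa a N * (detN N (\<lambda>i j. X j (s i)) * detN N (\<lambda>i j. Y j (s i)))) has_sum
         CNa a N * detN N (\<lambda>i j. fcoef a N j (\<lambda>x. E x * \<phi> x) (lam ! (i - 1) + N - i))) (dec_tuples N)"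
    unfolding X_def Y_def
    by (intro has_sum_cmult_right has_sum_detN_dec_tuples has_sum_Icoef_fcoef[OF a E \<phi>])
  also have "CNa a N * detN N (\<lambda>i j. fcoef a N j (\<lambda>x. E x * \<phi> x) (lam ! (i - 1) + N - i)) =
             PtildeNa a N E \<phi> lam / dimSO a N lam"
    using dimSO_pos[OF a assms(5)] by (simp add: PtildeNa_def PNa_def)
  finally have "((\<lambda>\<mu>. CNa a N * (detN N (\<lambda>i j. X j (shifted_signature N \<mu> i)) *
                                  detN N (\<lambda>i j. Y j (shifted_signature N \<mu> i)))) has_sum
                 PtildeNa a N E \<phi> lam / dimSO a N lam) (JN N)"
    by (subst (asm) has_sum_reindex_bij_betw[OF bij_betw_shifted_signature, symmetric])
  moreover have "CNa a N * (detN N (\<lambda>i j. X j (shifted_signature N \<mu> i)) *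
                            detN N (\<lambda>i j. Y j (shifted_signature N \<mu> i))) =
      detN N (\<lambda>i j. Icoef a \<phi> (\<mu> ! (i - 1) + N - i) (lam ! (j - 1) + N - j)) * (PNa a N E \<mu> / dimSO a N \<mu>)"
    if "\<mu> \<in> JN N" for \<mu>
    using dimSO_pos[OF a that]
    by (simp only: detN_shifted_signature) (simp add: X_def Y_def PNa_def)
  ultimately show ?thesis
    by (rule has_sum_cong[THEN iffD1, rotated])
qed

end
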